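(* Let $H$ be a self-adjoint operator on a $2^L$-dimensional Hilbert space whose eigenvalues, counted with multiplicity, are $E_{\boldsymbol n}=E_0+\sum_{k=1}^Ln_k\Lambda_k$, $\boldsymbol n\in\{0,1\}^L$, with real $E_0,\Lambda_1,\dots,\Lambda_L$. Let $\epsilon_1,\dots,\epsilon_{L_B}$ be the distinct values among the $\Lambda_k$, $\epsilon_j$ occurring $g_j$ times, and assume $\epsilon_1,\dots,\epsilon_{L_B}$ are linearly independent over $\mathbb Q$. Let $\chi(t)=\operatorname{tr}(e^{-itH})$. Then for every real $\lambda\ge0$, $$\overline{|\chi(t)|^{2\lambda}}=\prod_{j=1}^{L_B}\frac{4^{\lambda g_j}\,\Gamma\!\left(\tfrac12+\lambda g_j\right)}{\sqrt\pi\,\Gamma(1+\lambda g_j)}.$$ In particular, if all $g_j=1$ (so $L_B=L$), then $\overline{|\chi(t)|}=(4/\pi)^L$.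
   Context: $\overline{f(t)}:=\lim_{T\to\infty}\frac1T\int_0^Tf(t)\,dt$; $\Gamma$ is the Euler Gamma function. *)

theory Defs
  imports "HOL-Analysis.Analysis" "Jordan_Normal_Form.Schur_Decomposition" "Jordan_Normal_Form.Char_Poly"
begin

definition trace_mat :: "'a::comm_ring_1 mat \<Rightarrow> 'a" where
  "trace_mat A = (\<Sum>i<dim_row A. A $$ (i, i))"

definition hermitian_mat :: "complex mat \<Rightarrow> bool" where
  "hermitian_mat A \<longleftrightarrow> dim_row A = dim_col A \<and> mat_adjoint A = A"

definition mat_exp :: "complex mat \<Rightarrow> complex mat" where
  "mat_exp A = mat (dim_row A) (dim_col A)
     (\<lambda>(i, j). (\<Sum>k. (A ^\<^sub>m k) $$ (i, j) / of_nat (fact k)))"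

definition has_time_average :: "(real \<Rightarrow> real) \<Rightarrow> real \<Rightarrow> bool" where
  "has_time_average f a \<longleftrightarrow>
     (\<forall>T>0. f integrable_on {0..T}) \<and>
     ((\<lambda>T. integral {0..T} f / T) \<longlongrightarrow> a) at_top"

end

theory Submission
  imports Defs
begin

text \<open>
  Triangularising \<open>H\<close> gives \<open>\<chi>(t) = exp (-i t E0) * (\<Prod>k. 1 + exp (-i t \<Lambda> k))\<close>, hence
  \<open>|\<chi>(t)|\<^sup>2 = (\<Prod>k. 2 + 2 cos (\<Lambda> k t))\<close>. Grouping equal frequencies, \<open>|\<chi>(t)| powr (2 \<lambda>)\<close>
  becomes a product over the distinct frequencies \<open>v\<close> of \<open>h\<^sub>v (cos (v t))\<close> with
  \<open>h\<^sub>v x = (2 + 2 x) powr (\<lambda> g\<^sub>v)\<close>. For rationally independent frequencies the long-time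
  average of such a product is the product of the means of \<open>h\<^sub>v (cos x)\<close> over \<open>[0, \<pi>]\<close>:
  for powers of cosines because only the constant terms of their expansion into cosines of
  integer combinations of the frequencies survive averaging, and for continuous \<open>h\<^sub>v\<close> by
  Weierstrass approximation. Each mean is a Beta integral.
\<close>

section \<open>Long-time averages\<close>

lemma has_time_average_const: "has_time_average (\<lambda>t. c) c"
proof -
  have "\<forall>\<^sub>F T in at_top. integral {0..T} (\<lambda>t. c) / T = c"
    using eventually_gt_at_top[of "0::real"] by eventually_elim auto
  then show ?thesis
    unfolding has_time_average_def by (auto intro: tendsto_eventually)
qed

lemma has_time_average_add:
  assumes "has_time_average f a" "has_time_average g b"
  shows "has_time_average (\<lambda>t. f t + g t) (a + b)"
proof -
  have int: "f integrable_on {0..T}" "g integrable_on {0..T}" if "T > 0" for T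
    using assms that unfolding has_time_average_def by auto
  have "((\<lambda>T. integral {0..T} f / T + integral {0..T} g / T) \<longlongrightarrow> a + b) at_top"
    using assms unfolding has_time_average_def by (auto intro: tendsto_add)
  moreover have "\<forall>\<^sub>F T in at_top. integral {0..T} f / T + integral {0..T} g / T =
      integral {0..T} (\<lambda>t. f t + g t) / T"
    using eventually_gt_at_top[of "0::real"]
    by eventually_elim (simp add: int integral_add add_divide_distrib)
  ultimately show ?thesis
    unfolding has_time_average_def by (auto intro: integrable_add int dest: tendsto_cong[THEN iffD1])
qed

lemma has_time_average_cmult:
  assumes "has_time_average f a"
  shows "has_time_average (\<lambda>t. c * f t) (c * a)"
  using assms tendsto_mult_left[of "\<lambda>T. integral {0..T} f / T" a at_top c]
  unfolding has_time_average_def by (auto intro: integrable_on_mult_right)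

lemma has_time_average_sum:
  assumes "finite A" "\<And>x. x \<in> A \<Longrightarrow> has_time_average (f x) (a x)"
  shows "has_time_average (\<lambda>t. \<Sum>x\<in>A. f x t) (\<Sum>x\<in>A. a x)"
  using assms by (induction A rule: finite_induct) (auto intro: has_time_average_const has_time_average_add)

lemma has_time_average_cos: "has_time_average (\<lambda>t. cos (w * t)) (if w = 0 then 1 else 0)"
proof (cases "w = 0")
  case True
  then show ?thesis using has_time_average_const[of 1] by simp
next
  case False
  have der: "((\<lambda>t. sin (w * t) / w) has_real_derivative cos (w * x)) (at x within S)" for x S
    using False by (auto intro!: derivative_eq_intros)
  have int: "((\<lambda>t. cos (w * t)) has_integral sin (w * T) / w) {0..T}" if "T \<ge> 0" for T
  proof -
    have "((\<lambda>t. cos (w * t)) has_integral sin (w * T) / w - sin (w * 0) / w) {0..T}"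
      using that der
      by (intro fundamental_theorem_of_calculus)
        (auto simp: has_real_derivative_iff_has_vector_derivative[symmetric])
    then show ?thesis by simp
  qed
  have "((\<lambda>T. integral {0..T} (\<lambda>t. cos (w * t)) / T) \<longlongrightarrow> 0) at_top"
  proof (rule Lim_null_comparison)
    show "\<forall>\<^sub>F T in at_top. norm (integral {0..T} (\<lambda>t. cos (w * t)) / T) \<le> (1 / \<bar>w\<bar>) / T"
      using eventually_gt_at_top[of "0::real"]
    proof eventually_elim
      case (elim T)
      then have "norm (integral {0..T} (\<lambda>t. cos (w * t)) / T) = \<bar>sin (w * T)\<bar> / \<bar>w\<bar> / T"
        using int[of T] by (simp add: integral_unique abs_divide abs_mult)
      also have "\<dots> \<le> (1 / \<bar>w\<bar>) / T"
        using elim by (intro divide_right_mono) auto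
      finally show ?case .
    qed
    show "((\<lambda>T. (1 / \<bar>w\<bar>) / T) \<longlongrightarrow> 0) at_top"
      by (intro tendsto_divide_0[OF tendsto_const] filterlim_at_top_imp_at_infinity filterlim_ident)
  qed
  moreover have "(\<lambda>t. cos (w * t)) integrable_on {0..T}" if "T > 0" for T
    using int[of T] that by (auto simp: integrable_on_def)
  ultimately show ?thesis
    using False unfolding has_time_average_def by simp
qed

lemma has_time_average_spike:
  assumes "has_time_average f a" "negligible S" "\<And>t. t \<notin> S \<Longrightarrow> g t = f t"
  shows "has_time_average g a"
proof -
  have "(f has_integral y) {0..T} \<longleftrightarrow> (g has_integral y) {0..T}" for T y
    using assms(2,3) by (intro has_integral_spike_eq) auto
  then have "f integrable_on {0..T} \<longleftrightarrow> g integrable_on {0..T}"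
    and "integral {0..T} f = integral {0..T} g" for T
    by (auto simp: integrable_on_def integral_def)
  then show ?thesis using assms(1) unfolding has_time_average_def by simp
qed

lemma has_time_average_uniform_approx:
  assumes int: "\<And>T. T > 0 \<Longrightarrow> G integrable_on {0..T}"
    and approx: "\<And>e. e > 0 \<Longrightarrow> \<exists>G' c'. has_time_average G' c' \<and>
                    (\<forall>t. \<bar>G t - G' t\<bar> \<le> e) \<and> \<bar>c - c'\<bar> \<le> e"
  shows "has_time_average G c"
proof -
  have "((\<lambda>T. integral {0..T} G / T) \<longlongrightarrow> c) at_top"
  proof (rule tendstoI)
    fix e :: real assume e: "e > 0"
    obtain G' c' where G': "has_time_average G' c'" and close: "\<forall>t. \<bar>G t - G' t\<bar> \<le> e/4"
      and cc: "\<bar>c - c'\<bar> \<le> e/4"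
      using approx[of "e/4"] e by auto
    have int': "G' integrable_on {0..T}" if "T > 0" for T
      using G' that unfolding has_time_average_def by auto
    have "\<forall>\<^sub>F T in at_top. dist (integral {0..T} G' / T) c' < e/4"
      using G' e unfolding has_time_average_def by (intro tendstoD) auto
    then show "\<forall>\<^sub>F T in at_top. dist (integral {0..T} G / T) c < e"
      using eventually_gt_at_top[of "0::real"]
    proof eventually_elim
      case (elim T)
      have "\<bar>integral {0..T} G - integral {0..T} G'\<bar> = norm (integral {0..T} (\<lambda>t. G t - G' t))"
        using int int' elim by (simp add: integral_diff)
      also have "\<dots> \<le> integral {0..T} (\<lambda>t. e/4)"
        using int int' elim close
        by (intro integral_norm_bound_integral integrable_diff integrable_const_ivl) auto
      finally have diff: "\<bar>integral {0..T} G - integral {0..T} G'\<bar> \<le> e/4 * T"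
        using elim(2) by (simp add: mult.commute)
      have "\<bar>integral {0..T} G / T - integral {0..T} G' / T\<bar> =
          \<bar>integral {0..T} G - integral {0..T} G'\<bar> / T"
        using elim(2) by (simp add: diff_divide_distrib[symmetric] abs_divide)
      also have "\<dots> \<le> e/4"
        using diff elim(2) by (simp only: pos_divide_le_eq)
      finally have "\<bar>integral {0..T} G / T - integral {0..T} G' / T\<bar> \<le> e/4" .
      then show ?case using elim cc e unfolding dist_real_def by linarith
    qed
  qed
  then show ?thesis using int unfolding has_time_average_def by auto
qed

section \<open>Products over rationally independent frequencies\<close>

text \<open>For \<open>v \<noteq> 0\<close>, \<open>cos_mean h\<close> is the long-time average of \<open>h (cos (v * t))\<close>.\<close>
definition cos_mean :: "(real \<Rightarrow> real) \<Rightarrow> real" where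
  "cos_mean h = integral {0..pi} (\<lambda>x. h (cos x)) / pi"

definition rat_independent :: "real set \<Rightarrow> bool" where
  "rat_independent V \<longleftrightarrow>
     (\<forall>q :: real \<Rightarrow> rat. (\<Sum>v\<in>V. of_rat (q v) * v) = 0 \<longrightarrow> (\<forall>v\<in>V. q v = 0))"

lemma rat_independentD_int:
  assumes "rat_independent V" "(\<Sum>v\<in>V. of_int (k v) * v) = 0" "v \<in> V"
  shows "k v = 0"
proof -
  have "(\<Sum>v\<in>V. of_rat (of_int (k v)) * v) = 0"
    using assms(2) by simp
  from assms(1)[unfolded rat_independent_def, rule_format, of "\<lambda>v. of_int (k v)", OF this assms(3)]
  show ?thesis by simp
qed

lemma cos_power_eq_sum_exp:
  "complex_of_real (cos x ^ m) =
     (\<Sum>a\<le>m. of_real (real (m choose a) / 2 ^ m) *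
        exp (\<i> * of_real (of_int (2 * int a - int m) * x)))"
proof -
  have "complex_of_real (cos x ^ m) = (exp (\<i> * of_real x) + exp (- (\<i> * of_real x))) ^ m / 2 ^ m"
    by (simp add: cos_exp_eq cos_of_real[symmetric] power_divide)
  also have "\<dots> = (\<Sum>a\<le>m. of_nat (m choose a) *
      (exp (\<i> * of_real x) ^ a * exp (- (\<i> * of_real x)) ^ (m - a))) / 2 ^ m"
    by (simp add: binomial_ring mult.assoc)
  also have "\<dots> = (\<Sum>a\<le>m. of_real (real (m choose a) / 2 ^ m) *
      exp (\<i> * of_real (of_int (2 * int a - int m) * x)))"
    unfolding sum_divide_distrib
  proof (intro sum.cong refl)
    fix a assume "a \<in> {..m}"
    then have "of_nat a * (\<i> * of_real x) + of_nat (m - a) * - (\<i> * of_real x) =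
        \<i> * of_real (of_int (2 * int a - int m) * x)"
      by (simp add: of_nat_diff algebra_simps)
    then have "exp (\<i> * of_real x) ^ a * exp (- (\<i> * of_real x)) ^ (m - a) =
        exp (\<i> * of_real (of_int (2 * int a - int m) * x))"
      by (metis exp_add exp_of_nat_mult)
    then show "of_nat (m choose a) * (exp (\<i> * of_real x) ^ a * exp (- (\<i> * of_real x)) ^ (m - a)) / 2 ^ m =
        of_real (real (m choose a) / 2 ^ m) * exp (\<i> * of_real (of_int (2 * int a - int m) * x))"
      by simp
  qed
  finally show ?thesis .
qed

lemma prod_cos_power_eq_sum_cos:
  assumes "finite V"
  shows "(\<Prod>v\<in>V. cos (v * t) ^ m v) =
    (\<Sum>a\<in>PiE V (\<lambda>v. {..m v}). (\<Prod>v\<in>V. real (m v choose a v) / 2 ^ m v) *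
        cos ((\<Sum>v\<in>V. of_int (2 * int (a v) - int (m v)) * v) * t))"
proof -
  have "complex_of_real (\<Prod>v\<in>V. cos (v * t) ^ m v) =
      (\<Prod>v\<in>V. \<Sum>a\<le>m v. of_real (real (m v choose a) / 2 ^ m v) *
         exp (\<i> * of_real (of_int (2 * int a - int (m v)) * (v * t))))"
    by (simp only: of_real_prod cos_power_eq_sum_exp)
  also have "\<dots> = (\<Sum>a\<in>PiE V (\<lambda>v. {..m v}). \<Prod>v\<in>V. of_real (real (m v choose a v) / 2 ^ m v) *
         exp (\<i> * of_real (of_int (2 * int (a v) - int (m v)) * (v * t))))"
    using assms by (rule prod_sum_PiE) simp
  also have "\<dots> = (\<Sum>a\<in>PiE V (\<lambda>v. {..m v}). of_real (\<Prod>v\<in>V. real (m v choose a v) / 2 ^ m v) *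
      exp (\<i> * of_real ((\<Sum>v\<in>V. of_int (2 * int (a v) - int (m v)) * v) * t)))"
  proof (intro sum.cong refl)
    fix a
    have "exp (\<i> * of_real ((\<Sum>v\<in>V. of_int (2 * int (a v) - int (m v)) * v) * t)) =
        exp (\<Sum>v\<in>V. \<i> * of_real (of_int (2 * int (a v) - int (m v)) * (v * t)))"
      by (simp add: sum_distrib_left sum_distrib_right mult.assoc)
    also have "\<dots> = (\<Prod>v\<in>V. exp (\<i> * of_real (of_int (2 * int (a v) - int (m v)) * (v * t))))"
      by (rule exp_sum[OF assms])
    finally have exp_freq: "exp (\<i> * of_real ((\<Sum>v\<in>V. of_int (2 * int (a v) - int (m v)) * v) * t)) =
        (\<Prod>v\<in>V. exp (\<i> * of_real (of_int (2 * int (a v) - int (m v)) * (v * t))))" .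
    show "(\<Prod>v\<in>V. of_real (real (m v choose a v) / 2 ^ m v) *
          exp (\<i> * of_real (of_int (2 * int (a v) - int (m v)) * (v * t)))) =
        of_real (\<Prod>v\<in>V. real (m v choose a v) / 2 ^ m v) *
          exp (\<i> * of_real ((\<Sum>v\<in>V. of_int (2 * int (a v) - int (m v)) * v) * t))"
      by (simp only: prod.distrib of_real_prod exp_freq)
  qed
  finally have "Re (complex_of_real (\<Prod>v\<in>V. cos (v * t) ^ m v)) = Re \<dots>"
    by (rule arg_cong)
  moreover have re: "Re (of_real c * exp (\<i> * of_real w)) = c * cos w" for c w
    by (simp add: Re_exp)
  ultimately show ?thesis
    by (simp only: Re_complex_of_real Re_sum re)
qed

lemma has_integral_cos_int_mult:
  "((\<lambda>x. cos (of_int k * x)) has_integral (if k = 0 then pi else 0)) {0..pi}"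
proof (cases "k = 0")
  case True
  then show ?thesis using has_integral_const_real[of "1::real" 0 pi] by simp
next
  case False
  have "((\<lambda>x. cos (of_int k * x)) has_integral
      sin (of_int k * pi) / of_int k - sin (of_int k * 0) / of_int k) {0..pi}"
    using False
    by (intro fundamental_theorem_of_calculus)
      (auto intro!: derivative_eq_intros simp: has_real_derivative_iff_has_vector_derivative[symmetric])
  moreover have "sin (of_int k * pi) = 0"
    by (simp add: sin_times_pi_eq_0)
  ultimately show ?thesis using False by simp
qed

lemma cos_mean_power:
  "cos_mean (\<lambda>x. x ^ m) = (\<Sum>a\<le>m. real (m choose a) / 2 ^ m * (if 2 * a = m then 1 else 0))"
proof -
  have "cos x ^ m = (\<Sum>a\<le>m. real (m choose a) / 2 ^ m * cos (of_int (2 * int a - int m) * x))" for x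
    using arg_cong[where f = Re, OF cos_power_eq_sum_exp[of x m]]
    by (simp add: Re_sum Re_exp)
  moreover have "((\<lambda>x. \<Sum>a\<le>m. real (m choose a) / 2 ^ m * cos (of_int (2 * int a - int m) * x))
      has_integral (\<Sum>a\<le>m. real (m choose a) / 2 ^ m * (if 2 * int a - int m = 0 then pi else 0))) {0..pi}"
    by (intro has_integral_sum has_integral_mult_right has_integral_cos_int_mult) auto
  ultimately show ?thesis
    unfolding cos_mean_def by (auto simp: integral_unique sum_divide_distrib intro!: sum.cong)
qed

text \<open>After expanding the powers into cosines of integer combinations of the frequencies,
  only the terms of frequency \<open>0\<close> survive averaging; by rational independence these are the
  terms with \<open>2 * a v = m v\<close> for every \<open>v\<close>, so the average factorises.\<close>
lemma has_time_average_prod_cos_power: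
  assumes fin: "finite V" and indep: "rat_independent V"
  shows "has_time_average (\<lambda>t. \<Prod>v\<in>V. cos (v * t) ^ m v) (\<Prod>v\<in>V. cos_mean (\<lambda>x. x ^ m v))"
proof -
  define D where "D = PiE V (\<lambda>v. {..m v})"
  define c where "c a v = real (m v choose a v) / 2 ^ m v" for a v
  define freq where "freq a = (\<Sum>v\<in>V. of_int (2 * int (a v) - int (m v)) * v)" for a
  have expand: "(\<lambda>t. \<Prod>v\<in>V. cos (v * t) ^ m v) = (\<lambda>t. \<Sum>a\<in>D. (\<Prod>v\<in>V. c a v) * cos (freq a * t))"
    unfolding D_def c_def freq_def by (rule ext, rule prod_cos_power_eq_sum_cos[OF fin])
  have avg: "has_time_average (\<lambda>t. \<Sum>a\<in>D. (\<Prod>v\<in>V. c a v) * cos (freq a * t))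
      (\<Sum>a\<in>D. (\<Prod>v\<in>V. c a v) * (if freq a = 0 then 1 else 0))"
    unfolding D_def using fin
    by (intro has_time_average_sum has_time_average_cmult has_time_average_cos) (simp add: finite_PiE)
  have resonance: "(if freq a = 0 then 1 else 0) = (\<Prod>v\<in>V. if 2 * a v = m v then 1 else 0 :: real)" for a
  proof -
    have "freq a = 0 \<longleftrightarrow> (\<forall>v\<in>V. 2 * a v = m v)"
    proof
      assume "freq a = 0"
      then show "\<forall>v\<in>V. 2 * a v = m v"
        using rat_independentD_int[OF indep, of "\<lambda>v. 2 * int (a v) - int (m v)"]
        unfolding freq_def by fastforce
    next
      assume all: "\<forall>v\<in>V. 2 * a v = m v"
      have "of_int (2 * int (a v) - int (m v)) = (0::real)" if "v \<in> V" for v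
        using all that by (metis diff_self of_int_0 of_nat_mult of_nat_numeral)
      then show "freq a = 0"
        unfolding freq_def by simp
    qed
    then show ?thesis using fin by (auto simp: prod_zero_iff)
  qed
  have "(\<Sum>a\<in>D. (\<Prod>v\<in>V. c a v) * (if freq a = 0 then 1 else 0)) =
      (\<Sum>a\<in>D. \<Prod>v\<in>V. c a v * (if 2 * a v = m v then 1 else 0))"
    by (simp only: resonance prod.distrib)
  also have "\<dots> = (\<Prod>v\<in>V. cos_mean (\<lambda>x. x ^ m v))"
    unfolding D_def c_def cos_mean_power using fin by (simp add: prod_sum_PiE)
  finally show ?thesis
    using avg unfolding expand by simp
qed

lemma continuous_on_comp_cos:
  fixes h :: "real \<Rightarrow> real" and S :: "real set"
  assumes "continuous_on {-1..1} h"
  shows "continuous_on S (\<lambda>x. h (cos x))"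
proof (rule continuous_on_compose2[OF assms])
  show "continuous_on S cos"
    using continuous_on_cos[OF continuous_on_id, of S] by simp
qed (auto simp: cos_ge_minus_one)

lemma cos_mean_sum_monomials:
  "cos_mean (\<lambda>x. \<Sum>i\<le>n. a i * x ^ i) = (\<Sum>i\<le>n. a i * cos_mean (\<lambda>x. x ^ i))"
proof -
  have "(\<lambda>x. a i * cos x ^ i) integrable_on {0..pi}" for i
    by (intro integrable_continuous_interval continuous_intros)
  then show ?thesis
    unfolding cos_mean_def by (simp add: integral_sum sum_divide_distrib)
qed

lemma has_time_average_prod_polynomial_cos:
  assumes fin: "finite V" and indep: "rat_independent V"
    and poly: "\<And>v. v \<in> V \<Longrightarrow> real_polynomial_function (h v)"
  shows "has_time_average (\<lambda>t. \<Prod>v\<in>V. h v (cos (v * t))) (\<Prod>v\<in>V. cos_mean (h v))"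
proof -
  have "\<forall>v\<in>V. \<exists>an. h v = (\<lambda>x. \<Sum>i\<le>snd an. fst an i * x ^ i)"
    using poly by (auto simp: real_polynomial_function_iff_sum)
  then obtain an where an: "\<forall>v\<in>V. h v = (\<lambda>x. \<Sum>i\<le>snd (an v). fst (an v) i * x ^ i)"
    by (rule bchoice[THEN exE])
  define a where "a v = fst (an v)" for v
  define n where "n v = snd (an v)" for v
  define D where "D = PiE V (\<lambda>v. {..n v})"
  have expand: "(\<Prod>v\<in>V. h v (f v)) =
      (\<Sum>J\<in>D. (\<Prod>v\<in>V. a v (J v)) * (\<Prod>v\<in>V. f v ^ J v))" for f :: "real \<Rightarrow> real"
  proof -
    have "(\<Prod>v\<in>V. h v (f v)) = (\<Prod>v\<in>V. \<Sum>i\<le>n v. a v i * f v ^ i)"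
      using an by (auto simp: a_def n_def intro!: prod.cong)
    then show ?thesis
      unfolding D_def using fin by (simp add: prod_sum_PiE prod.distrib)
  qed
  have "(\<Prod>v\<in>V. cos_mean (h v)) = (\<Prod>v\<in>V. \<Sum>i\<le>n v. a v i * cos_mean (\<lambda>x. x ^ i))"
    using an by (auto simp: a_def n_def cos_mean_sum_monomials intro!: prod.cong)
  also have "\<dots> = (\<Sum>J\<in>D. (\<Prod>v\<in>V. a v (J v)) * (\<Prod>v\<in>V. cos_mean (\<lambda>x. x ^ J v)))"
    unfolding D_def using fin by (simp add: prod_sum_PiE prod.distrib)
  finally have mean: "(\<Prod>v\<in>V. cos_mean (h v)) = \<dots>" .
  show ?thesis
    unfolding expand mean D_def using fin
    by (intro has_time_average_sum has_time_average_cmult has_time_average_prod_cos_power indep)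
      (auto simp: finite_PiE)
qed

lemma abs_cos_mean_diff_le:
  assumes "continuous_on {-1..1} h1" "continuous_on {-1..1} h2"
    and "\<And>x. x \<in> {-1..1} \<Longrightarrow> \<bar>h1 x - h2 x\<bar> \<le> d"
  shows "\<bar>cos_mean h1 - cos_mean h2\<bar> \<le> d"
proof -
  have int: "(\<lambda>x. h1 (cos x)) integrable_on {0..pi}" "(\<lambda>x. h2 (cos x)) integrable_on {0..pi}"
    by (intro integrable_continuous_interval continuous_on_comp_cos assms(1,2))+
  have close: "norm (h1 (cos x) - h2 (cos x)) \<le> d" for x
    using assms(3)[of "cos x"] by simp
  have "\<bar>integral {0..pi} (\<lambda>x. h1 (cos x)) - integral {0..pi} (\<lambda>x. h2 (cos x))\<bar>
      = norm (integral {0..pi} (\<lambda>x. h1 (cos x) - h2 (cos x)))"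
    using int by (simp add: integral_diff)
  also have "\<dots> \<le> integral {0..pi} (\<lambda>x. d)"
    by (rule integral_norm_bound_integral[OF integrable_diff[OF int] integrable_const_ivl close])
  finally show ?thesis
    unfolding cos_mean_def by (simp add: diff_divide_distrib[symmetric] abs_divide pos_divide_le_eq mult.commute)
qed

lemma abs_prod_diff_le:
  fixes a b :: "'a \<Rightarrow> real"
  assumes "finite V" "B \<ge> 1"
    and "\<And>v. v \<in> V \<Longrightarrow> \<bar>a v\<bar> \<le> B" "\<And>v. v \<in> V \<Longrightarrow> \<bar>b v\<bar> \<le> B"
    and "\<And>v. v \<in> V \<Longrightarrow> \<bar>a v - b v\<bar> \<le> d"
  shows "\<bar>(\<Prod>v\<in>V. a v) - (\<Prod>v\<in>V. b v)\<bar> \<le> real (card V) * B ^ card V * d"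
  using assms
proof (induction V rule: finite_induct)
  case empty
  then show ?case by simp
next
  case (insert x F)
  let ?n = "card F"
  have IH: "\<bar>prod a F - prod b F\<bar> \<le> real ?n * B ^ ?n * d"
    using insert.IH insert.prems by blast
  have ax: "\<bar>a x\<bar> \<le> B" and dx: "\<bar>a x - b x\<bar> \<le> d"
    using insert.prems by auto
  then have d0: "0 \<le> d" by linarith
  have bF: "\<bar>prod b F\<bar> \<le> B ^ ?n"
  proof -
    have "\<bar>prod b F\<bar> = (\<Prod>v\<in>F. \<bar>b v\<bar>)" by (simp add: abs_prod)
    also have "\<dots> \<le> (\<Prod>v\<in>F. B)" using insert.prems by (intro prod_mono) auto
    finally show ?thesis by simp
  qed
  have "\<bar>prod a (insert x F) - prod b (insert x F)\<bar> =
      \<bar>a x * (prod a F - prod b F) + (a x - b x) * prod b F\<bar>"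
    using insert.hyps by (simp add: algebra_simps)
  also have "\<dots> \<le> \<bar>a x\<bar> * \<bar>prod a F - prod b F\<bar> + \<bar>a x - b x\<bar> * \<bar>prod b F\<bar>"
    by (metis abs_mult abs_triangle_ineq)
  also have "\<dots> \<le> B * (real ?n * B ^ ?n * d) + d * B ^ ?n"
    using dx insert.prems(1) by (intro add_mono mult_mono IH ax dx bF) auto
  also have "\<dots> \<le> B * (real ?n * B ^ ?n * d) + d * B ^ Suc ?n"
    using insert.prems(1) d0 by (intro add_left_mono mult_left_mono power_increasing) auto
  also have "\<dots> = real (card (insert x F)) * B ^ card (insert x F) * d"
    using insert.hyps by (simp add: algebra_simps)
  finally show ?case .
qed

lemma abs_cos_mean_le:
  assumes "continuous_on {-1..1} h" "\<And>x. x \<in> {-1..1} \<Longrightarrow> \<bar>h x\<bar> \<le> B"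
  shows "\<bar>cos_mean h\<bar> \<le> B"
proof -
  have "\<bar>cos_mean h - cos_mean (\<lambda>x. 0)\<bar> \<le> B"
    using assms by (intro abs_cos_mean_diff_le continuous_on_const) auto
  then show ?thesis by (simp add: cos_mean_def)
qed

lemma uniform_polynomial_approximations:
  fixes h :: "'a \<Rightarrow> real \<Rightarrow> real"
  assumes "compact S" "\<And>v. v \<in> V \<Longrightarrow> continuous_on S (h v)" "d > 0"
  shows "\<exists>p. \<forall>v\<in>V. real_polynomial_function (p v) \<and> (\<forall>x\<in>S. \<bar>h v x - p v x\<bar> \<le> d)"
proof (rule bchoice, rule ballI)
  fix v assume "v \<in> V"
  then obtain p where "polynomial_function p" "\<forall>x\<in>S. norm (h v x - p x) < d"
    using Stone_Weierstrass_polynomial_function[OF assms(1,2) assms(3)] by blast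
  then show "\<exists>p. real_polynomial_function p \<and> (\<forall>x\<in>S. \<bar>h v x - p x\<bar> \<le> d)"
    by (intro exI[of _ p]) (auto simp: real_polynomial_function_eq intro: less_imp_le)
qed

lemma has_time_average_prod_continuous_cos:
  fixes h :: "real \<Rightarrow> real \<Rightarrow> real"
  assumes fin: "finite V" and indep: "rat_independent V"
    and cont: "\<And>v. v \<in> V \<Longrightarrow> continuous_on {-1..1} (h v)"
  shows "has_time_average (\<lambda>t. \<Prod>v\<in>V. h v (cos (v * t))) (\<Prod>v\<in>V. cos_mean (h v))"
proof (rule has_time_average_uniform_approx)
  show "(\<lambda>t. \<Prod>v\<in>V. h v (cos (v * t))) integrable_on {0..T}" for T
    using cont
    by (intro integrable_continuous_interval continuous_on_prod continuous_on_compose2[OF continuous_on_comp_cos])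
      (auto intro!: continuous_intros)
next
  fix e :: real assume e: "e > 0"
  have "bounded (\<Union>v\<in>V. h v ` {-1..1})"
    using fin cont by (intro compact_imp_bounded compact_UN compact_continuous_image compact_Icc) auto
  then obtain B0 where B0: "\<And>v x. v \<in> V \<Longrightarrow> x \<in> {-1..1} \<Longrightarrow> \<bar>h v x\<bar> \<le> B0"
    unfolding bounded_iff by fastforce
  define B where "B = max B0 0 + 2"
  have B: "B \<ge> 1" and hB: "\<And>v x. v \<in> V \<Longrightarrow> x \<in> {-1..1} \<Longrightarrow> \<bar>h v x\<bar> \<le> B - 1"
    using B0 unfolding B_def by force+
  define d where "d = min 1 (e / (real (card V) * B ^ card V + 1))"
  have d: "d > 0" "d \<le> 1" and err: "real (card V) * B ^ card V * d \<le> e"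
  proof -
    have K: "0 \<le> real (card V) * B ^ card V" using B by simp
    show "d > 0" "d \<le> 1" using e K unfolding d_def by auto
    have "real (card V) * B ^ card V * d \<le> (real (card V) * B ^ card V + 1) * (e / (real (card V) * B ^ card V + 1))"
      using K e d_def by (intro mult_mono) (auto simp: min_le_iff_disj)
    then show "real (card V) * B ^ card V * d \<le> e" using K by simp
  qed
  from uniform_polynomial_approximations[OF compact_Icc cont d(1)]
  obtain p where p: "\<forall>v\<in>V. real_polynomial_function (p v) \<and> (\<forall>x\<in>{-1..1}. \<bar>h v x - p v x\<bar> \<le> d)" ..
  have poly: "real_polynomial_function (p v)" if "v \<in> V" for v
    using p that by simp
  have close: "\<bar>h v x - p v x\<bar> \<le> d" if "v \<in> V" "x \<in> {-1..1}" for v x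
    using p that by simp
  have cont_p: "continuous_on {-1..1} (p v)" if "v \<in> V" for v
    using poly[OF that] by (intro continuous_on_polymonial_function) (simp add: real_polynomial_function_eq)
  have pB: "\<bar>p v x\<bar> \<le> B" if "v \<in> V" "x \<in> {-1..1}" for v x
    using close[OF that] hB[OF that] d(2) by linarith
  have cos_in: "cos s \<in> {-1..1}" for s :: real
    by (simp add: cos_ge_minus_one)
  show "\<exists>G' c'. has_time_average G' c' \<and>
      (\<forall>t. \<bar>(\<Prod>v\<in>V. h v (cos (v * t))) - G' t\<bar> \<le> e) \<and> \<bar>(\<Prod>v\<in>V. cos_mean (h v)) - c'\<bar> \<le> e"
  proof (intro exI conjI allI)
    show "has_time_average (\<lambda>t. \<Prod>v\<in>V. p v (cos (v * t))) (\<Prod>v\<in>V. cos_mean (p v))"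
      using poly by (rule has_time_average_prod_polynomial_cos[OF fin indep])
    show "\<bar>(\<Prod>v\<in>V. h v (cos (v * t))) - (\<Prod>v\<in>V. p v (cos (v * t)))\<bar> \<le> e" for t
    proof (rule order_trans[OF abs_prod_diff_le[OF fin B] err])
      fix v assume v: "v \<in> V"
      show "\<bar>h v (cos (v * t))\<bar> \<le> B" using hB[OF v cos_in, of "v * t"] by simp
      show "\<bar>p v (cos (v * t))\<bar> \<le> B" using pB[OF v cos_in] .
      show "\<bar>h v (cos (v * t)) - p v (cos (v * t))\<bar> \<le> d" using close[OF v cos_in] .
    qed
    show "\<bar>(\<Prod>v\<in>V. cos_mean (h v)) - (\<Prod>v\<in>V. cos_mean (p v))\<bar> \<le> e"
    proof (rule order_trans[OF abs_prod_diff_le[OF fin B] err])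
      fix v assume v: "v \<in> V"
      show "\<bar>cos_mean (h v)\<bar> \<le> B" using cont[OF v] hB[OF v] by (intro abs_cos_mean_le) fastforce+
      show "\<bar>cos_mean (p v)\<bar> \<le> B" using cont_p[OF v] pB[OF v] by (rule abs_cos_mean_le)
      show "\<bar>cos_mean (h v) - cos_mean (p v)\<bar> \<le> d"
        using cont[OF v] cont_p[OF v] close[OF v] by (rule abs_cos_mean_diff_le)
    qed
  qed
qed

section \<open>A Beta integral\<close>

lemma Beta_integrand_substitution_cos:
  fixes x s :: real
  assumes x: "0 < x" "x < pi"
  shows "((1 - cos x) / 2) powr (1/2 - 1) * (1 - (1 - cos x) / 2) powr (s + 1/2 - 1) * (sin x / 2)
       = ((1 + cos x) / 2) powr s"
proof -
  define u where "u = (1 - cos x) / 2"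
  define w where "w = (1 + cos x) / 2"
  have c: "cos x < 1" "cos x > -1"
    using x cos_monotone_0_pi[of 0 x] cos_monotone_0_pi[of x pi] by auto
  have u: "u > 0" and w: "w > 0"
    using c unfolding u_def w_def by auto
  have w1: "1 - u = w"
    unfolding u_def w_def by (simp add: field_simps)
  have "4 * (u * w) = 1 - cos x ^ 2"
    unfolding u_def w_def by (simp add: field_simps power2_eq_square)
  then have "sin x ^ 2 = 4 * (u * w)"
    by (simp add: sin_squared_eq)
  then have "sin x = sqrt (4 * (u * w))"
    using sin_gt_zero[OF x] by (metis abs_of_pos real_sqrt_abs)
  then have "sin x / 2 = (u * w) powr (1/2)"
    using u w by (simp add: real_sqrt_mult powr_half_sqrt)
  then have "u powr (1/2 - 1) * (1 - u) powr (s + 1/2 - 1) * (sin x / 2) =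
      (u powr (1/2 - 1) * u powr (1/2)) * (w powr (s + 1/2 - 1) * w powr (1/2))"
    using u w by (simp add: w1 powr_mult)
  also have "\<dots> = w powr s"
    using u by (simp add: powr_add[symmetric])
  finally show ?thesis unfolding u_def w_def .
qed

lemma continuous_on_half_one_plus_cos_powr:
  fixes S :: "real set"
  assumes "s > 0"
  shows "continuous_on S (\<lambda>x. ((1 + cos x) / 2) powr s)"
proof -
  have "0 \<le> 1 + cos x" for x :: real
    using cos_ge_minus_one[of x] by linarith
  then show ?thesis
    using assms by (intro continuous_on_powr') (auto intro!: continuous_intros)
qed

lemma interval_integral_Beta_substitution_cos:
  fixes s :: real
  assumes s: "s > 0"
  shows "(LBINT u=ereal 0..ereal 1. u powr (1/2 - 1) * (1 - u) powr (s + 1/2 - 1)) =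
         (LBINT x=ereal 0..ereal pi. ((1 + cos x) / 2) powr s)"
proof -
  define f where "f u = u powr (1/2 - 1) * (1 - u) powr (s + 1/2 - 1)" for u :: real
  define g where "g x = (1 - cos x) / 2" for x :: real
  define g' where "g' x = sin x / 2" for x :: real
  define \<phi> where "\<phi> x = ((1 + cos x) / 2) powr s" for x :: real
  have int: "set_integrable lborel {0<..<pi} \<phi>"
    using borel_integrable_compact[OF compact_Icc continuous_on_half_one_plus_cos_powr[OF s, of "{0..pi}"]]
    unfolding \<phi>_def set_integrable_def[symmetric] by (rule set_integrable_subset) auto
  have subst: "f (g x) * g' x = \<phi> x" if "0 < x" "x < pi" for x
    using Beta_integrand_substitution_cos[OF that, of s] unfolding f_def g_def g'_def \<phi>_def by simp
  have g_lim: "(g \<longlongrightarrow> g a) (at a within S)" for a S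
    unfolding g_def by (intro tendsto_intros) auto
  have "(LBINT u=ereal 0..ereal 1. f u) = (LBINT x=ereal 0..ereal pi. f (g x) * g' x)"
  proof (rule interval_integral_substitution_nonneg)
    fix x assume x: "ereal 0 < ereal x" "ereal x < ereal pi"
    then have "0 < g x" "g x < 1"
      using cos_monotone_0_pi[of 0 x] cos_monotone_0_pi[of x pi] unfolding g_def by auto
    then show "isCont f (g x)"
      unfolding f_def by (intro continuous_intros) auto
    show "(g has_real_derivative g' x) (at x)"
      unfolding g_def g'_def by (auto intro!: derivative_eq_intros)
  next
    have "einterval (ereal 0) (ereal pi) = {0<..<pi}"
      by (auto simp: einterval_def)
    then show "set_integrable lborel (einterval (ereal 0) (ereal pi)) (\<lambda>x. f (g x) * g' x)"
      using int by (subst set_integrable_cong[OF refl refl, where f' = \<phi>]) (auto simp: subst)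
    show "((ereal \<circ> g \<circ> real_of_ereal) \<longlongrightarrow> ereal 0) (at_right (ereal 0))"
      "((ereal \<circ> g \<circ> real_of_ereal) \<longlongrightarrow> ereal 1) (at_left (ereal pi))"
      using g_lim[of 0] g_lim[of pi] unfolding ereal_tendsto_simps o_assoc[symmetric] by (simp_all add: g_def)
  qed (auto simp: f_def g'_def intro!: sin_ge_zero)
  also have "\<dots> = (LBINT x=ereal 0..ereal pi. \<phi> x)"
    by (rule interval_integral_cong) (auto simp: einterval_def subst)
  finally show ?thesis
    unfolding f_def \<phi>_def .
qed

lemma has_integral_half_one_plus_cos_powr:
  fixes s :: real
  assumes s: "s > 0"
  shows "((\<lambda>x. ((1 + cos x) / 2) powr s) has_integral Beta (1/2) (s + 1/2)) {0..pi}"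
proof -
  have cont: "continuous_on {0..pi} (\<lambda>x. ((1 + cos x) / 2) powr s)"
    by (rule continuous_on_half_one_plus_cos_powr[OF s])
  have "Beta (1/2) (s + 1/2) = (LBINT u=ereal 0..ereal 1. u powr (1/2 - 1) * (1 - u) powr (s + 1/2 - 1))"
    using has_integral_Beta_real[of "1/2" "s + 1/2"] integrable_Beta[of "1/2" "s + 1/2"] s
    by (simp add: interval_integral_eq_integral integral_unique)
  also have "\<dots> = integral {0..pi} (\<lambda>x. ((1 + cos x) / 2) powr s)"
    unfolding interval_integral_Beta_substitution_cos[OF s]
    using borel_integrable_compact[OF compact_Icc cont]
    by (intro interval_integral_eq_integral) (auto simp: set_integrable_def)
  finally show ?thesis
    using integrable_continuous_interval[OF cont] by (simp add: has_integral_integral)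
qed

lemma cos_mean_two_plus_two_powr:
  fixes s :: real
  assumes "s > 0"
  shows "cos_mean (\<lambda>x. (2 + 2 * x) powr s) = 4 powr s * Gamma (1/2 + s) / (sqrt pi * Gamma (1 + s))"
proof -
  have factor: "(2 + 2 * cos x) powr s = 4 powr s * ((1 + cos x) / 2) powr s" for x
  proof -
    have "(2 + 2 * cos x) powr s = (4 * ((1 + cos x) / 2)) powr s"
      by (rule arg_cong[where f = "\<lambda>y. y powr s"]) simp
    then show ?thesis by (simp only: powr_mult)
  qed
  have "((\<lambda>x. (2 + 2 * cos x) powr s) has_integral 4 powr s * Beta (1/2) (s + 1/2)) {0..pi}"
    unfolding factor by (rule has_integral_mult_right[OF has_integral_half_one_plus_cos_powr[OF assms]])
  then have "integral {0..pi} (\<lambda>x. (2 + 2 * cos x) powr s) = 4 powr s * Beta (1/2) (s + 1/2)"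
    by (rule integral_unique)
  moreover have "Beta (1/2) (s + 1/2) = sqrt pi * Gamma (1/2 + s) / Gamma (1 + s)"
    unfolding Beta_def Gamma_one_half_real by (simp add: add_ac)
  ultimately have "cos_mean (\<lambda>x. (2 + 2 * x) powr s) =
      4 powr s * (sqrt pi * Gamma (1/2 + s) / Gamma (1 + s)) / (sqrt pi * sqrt pi)"
    unfolding cos_mean_def by simp
  also have "\<dots> = 4 powr s * Gamma (1/2 + s) / (sqrt pi * Gamma (1 + s))"
  proof -
    have aux: "a * (q * b / c) / (q * q) = a * b / (q * c)" if "q > 0" for a b c q :: real
      using that by (cases "c = 0") (auto simp: field_simps)
    show ?thesis by (rule aux) simp
  qed
  finally show ?thesis .
qed

lemma Gamma_three_halves: "Gamma (3/2 :: real) = sqrt pi / 2"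
proof -
  have "(1/2 :: real) \<notin> \<int>\<^sub>\<le>\<^sub>0"
    using nonpos_Ints_nonpos by fastforce
  then have "Gamma (1/2 + 1 :: real) = 1/2 * Gamma (1/2)"
    by (rule Gamma_plus1)
  then show ?thesis by (simp add: Gamma_one_half_real)
qed

section \<open>Traces of matrix exponentials\<close>

lemma trace_mat_mult_comm:
  fixes A B :: "'a::comm_ring_1 mat"
  assumes A: "A \<in> carrier_mat n m" and B: "B \<in> carrier_mat m n"
  shows "trace_mat (A * B) = trace_mat (B * A)"
proof -
  have "trace_mat (A * B) = (\<Sum>i<n. \<Sum>l<m. A $$ (i, l) * B $$ (l, i))"
    using A B unfolding trace_mat_def by (auto simp: scalar_prod_def lessThan_atLeast0)
  also have "\<dots> = (\<Sum>l<m. \<Sum>i<n. B $$ (l, i) * A $$ (i, l))"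
    by (subst sum.swap) (simp add: mult.commute)
  also have "\<dots> = trace_mat (B * A)"
    using A B unfolding trace_mat_def by (auto simp: scalar_prod_def lessThan_atLeast0)
  finally show ?thesis .
qed

lemma upper_triangular_mult:
  fixes A B :: "'a::semiring_0 mat"
  assumes A: "A \<in> carrier_mat n n" and B: "B \<in> carrier_mat n n"
    and uA: "upper_triangular A" and uB: "upper_triangular B"
  shows "upper_triangular (A * B)"
proof (rule upper_triangularI)
  fix i j assume ji: "j < i" and "i < dim_row (A * B)"
  then have i: "i < n" using A by simp
  have zero: "A $$ (i, l) * B $$ (l, j) = 0" if "l < n" for l
  proof (cases "l < i")
    case True
    have "A $$ (i, l) = 0" by (rule upper_triangularD[OF uA True]) (use i A in simp)
    then show ?thesis by simp
  next
    case False
    then have "j < l" using ji by simp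
    then have "B $$ (l, j) = 0" by (rule upper_triangularD[OF uB]) (use that B in simp)
    then show ?thesis by simp
  qed
  have "(A * B) $$ (i, j) = (\<Sum>l\<in>{0..<n}. A $$ (i, l) * B $$ (l, j))"
    using A B ji i by (simp add: scalar_prod_def)
  also have "\<dots> = 0"
    by (intro sum.neutral ballI zero) simp
  finally show "(A * B) $$ (i, j) = 0" .
qed

lemma diag_upper_triangular_mult:
  fixes A B :: "'a::semiring_0 mat"
  assumes A: "A \<in> carrier_mat n n" and B: "B \<in> carrier_mat n n"
    and uA: "upper_triangular A" and uB: "upper_triangular B" and i: "i < n"
  shows "(A * B) $$ (i, i) = A $$ (i, i) * B $$ (i, i)"
proof -
  have diag: "A $$ (i, l) * B $$ (l, i) = (if l = i then A $$ (i, i) * B $$ (i, i) else 0)" if "l < n" for l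
  proof (cases "l < i")
    case True
    have "A $$ (i, l) = 0" by (rule upper_triangularD[OF uA True]) (use i A in simp)
    then show ?thesis using True by simp
  next
    case False
    show ?thesis
    proof (cases "l = i")
      case False
      with \<open>\<not> l < i\<close> have "i < l" by simp
      then have "B $$ (l, i) = 0" by (rule upper_triangularD[OF uB]) (use that B in simp)
      then show ?thesis using False by simp
    qed simp
  qed
  have "(A * B) $$ (i, i) = (\<Sum>l\<in>{0..<n}. A $$ (i, l) * B $$ (l, i))"
    using A B i by (simp add: scalar_prod_def)
  also have "\<dots> = (\<Sum>l\<in>{0..<n}. if l = i then A $$ (i, i) * B $$ (i, i) else 0)"
    by (intro sum.cong refl diag) simp
  also have "\<dots> = A $$ (i, i) * B $$ (i, i)"
    using i by simp
  finally show ?thesis .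
qed

lemma upper_triangular_power:
  fixes A :: "'a::semiring_1 mat"
  assumes A: "A \<in> carrier_mat n n" and "upper_triangular A"
  shows "upper_triangular (A ^\<^sub>m k) \<and> (\<forall>i<n. (A ^\<^sub>m k) $$ (i, i) = A $$ (i, i) ^ k)"
proof (induction k)
  case 0
  then show ?case using A by auto
next
  case (Suc k)
  then show ?case
    using assms upper_triangular_mult[of "A ^\<^sub>m k" n A] diag_upper_triangular_mult[of "A ^\<^sub>m k" n A]
    by (simp add: power_commutes)
qed

lemma trace_mat_power_eq_sum_eigenvalues:
  fixes A :: "complex mat"
  assumes A: "A \<in> carrier_mat n n" and char: "char_poly A = (\<Prod>e\<leftarrow>es. [:- e, 1:])"
  shows "trace_mat (A ^\<^sub>m k) = (\<Sum>e\<leftarrow>es. e ^ k)"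
proof -
  obtain B P Q where schur: "schur_decomposition A es = (B, P, Q)"
    by (cases "schur_decomposition A es") auto
  from schur_decomposition[OF A char schur]
  have sim: "similar_mat_wit A B P Q" and ut: "upper_triangular B" and diag: "diag_mat B = es"
    by auto
  note dims = similar_mat_witD2[OF A sim]
  have "trace_mat (A ^\<^sub>m k) = trace_mat (P * B ^\<^sub>m k * Q)"
    by (simp add: similar_mat_wit_pow_id[OF sim])
  also have "\<dots> = trace_mat (Q * (P * B ^\<^sub>m k))"
    by (rule trace_mat_mult_comm[of _ n n]) (use dims in auto)
  also have "Q * (P * B ^\<^sub>m k) = (Q * P) * B ^\<^sub>m k"
    by (rule assoc_mult_mat[symmetric]) (use dims in auto)
  also have "\<dots> = B ^\<^sub>m k"
    using dims by simp
  also have "trace_mat (B ^\<^sub>m k) = (\<Sum>i<n. B $$ (i, i) ^ k)"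
    unfolding trace_mat_def using dims upper_triangular_power[OF dims(5) ut, of k] by simp
  also have "\<dots> = (\<Sum>e\<leftarrow>es. e ^ k)"
    unfolding diag[symmetric] diag_mat_def using dims
    by (simp add: sum_set_upt_conv_sum_list_nat[symmetric] lessThan_atLeast0 o_def)
  finally show ?thesis .
qed

lemma norm_mat_power_entry_le:
  fixes A :: "complex mat"
  assumes A: "A \<in> carrier_mat n n" and M: "\<And>i j. i < n \<Longrightarrow> j < n \<Longrightarrow> cmod (A $$ (i, j)) \<le> M"
    and i: "i < n" and j: "j < n"
  shows "cmod ((A ^\<^sub>m k) $$ (i, j)) \<le> (real n * M) ^ k"
  using i j
proof (induction k arbitrary: i j)
  case 0
  then show ?case using A by simp
next
  case (Suc k)
  have M0: "0 \<le> M" using M[OF Suc.prems(1,1)] by (rule order_trans[OF norm_ge_zero])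
  have "cmod ((A ^\<^sub>m Suc k) $$ (i, j)) = cmod (\<Sum>l\<in>{0..<n}. (A ^\<^sub>m k) $$ (i, l) * A $$ (l, j))"
    using A Suc.prems by (simp add: scalar_prod_def)
  also have "\<dots> \<le> (\<Sum>l\<in>{0..<n}. cmod ((A ^\<^sub>m k) $$ (i, l)) * cmod (A $$ (l, j)))"
    unfolding norm_mult[symmetric] by (rule norm_sum)
  also have "\<dots> \<le> (\<Sum>l\<in>{0..<n}. (real n * M) ^ k * M)"
    by (intro sum_mono mult_mono Suc.IH M) (use Suc.prems M0 in auto)
  also have "\<dots> = (real n * M) ^ Suc k" by (simp add: algebra_simps)
  finally show ?case .
qed

lemma summable_mat_exp_entry:
  fixes A :: "complex mat"
  assumes A: "A \<in> carrier_mat n n" and i: "i < n" and j: "j < n"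
  shows "summable (\<lambda>k. (A ^\<^sub>m k) $$ (i, j) / of_nat (fact k))"
proof (rule summable_comparison_test)
  define M where "M = (\<Sum>i<n. \<Sum>j<n. cmod (A $$ (i, j)))"
  have "cmod (A $$ (i, j)) \<le> M" if "i < n" "j < n" for i j
    unfolding M_def using that
    by (intro order_trans[OF member_le_sum[of j] member_le_sum[of i]]) (auto intro: sum_nonneg)
  then show "\<exists>N. \<forall>k\<ge>N. norm ((A ^\<^sub>m k) $$ (i, j) / of_nat (fact k)) \<le> inverse (fact k) * (real n * M) ^ k"
    using norm_mat_power_entry_le[OF A _ i j]
    by (auto simp: norm_divide divide_simps mult.commute)
  show "summable (\<lambda>k. inverse (fact k) * (real n * M) ^ k)"
    by (rule summable_exp)
qed

lemma trace_mat_exp: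
  fixes A :: "complex mat"
  assumes A: "A \<in> carrier_mat n n"
  shows "trace_mat (mat_exp A) = (\<Sum>k. trace_mat (A ^\<^sub>m k) / of_nat (fact k))"
proof -
  have "trace_mat (mat_exp A) = (\<Sum>i<n. \<Sum>k. (A ^\<^sub>m k) $$ (i, i) / of_nat (fact k))"
    using A unfolding trace_mat_def mat_exp_def by simp
  also have "\<dots> = (\<Sum>k. \<Sum>i<n. (A ^\<^sub>m k) $$ (i, i) / of_nat (fact k))"
    by (rule suminf_sum[symmetric]) (use summable_mat_exp_entry[OF A] in auto)
  also have "\<dots> = (\<Sum>k. trace_mat (A ^\<^sub>m k) / of_nat (fact k))"
    using A unfolding trace_mat_def by (simp add: sum_divide_distrib)
  finally show ?thesis .
qed

lemma smult_mat_power: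
  fixes A :: "'a::comm_ring_1 mat"
  assumes A: "A \<in> carrier_mat n n"
  shows "(c \<cdot>\<^sub>m A) ^\<^sub>m k = c ^ k \<cdot>\<^sub>m (A ^\<^sub>m k)"
proof (induction k)
  case 0
  then show ?case using A by (auto intro!: eq_matI)
next
  case (Suc k)
  have "(c \<cdot>\<^sub>m A) ^\<^sub>m Suc k = c ^ k \<cdot>\<^sub>m ((A ^\<^sub>m k) * (c \<cdot>\<^sub>m A))"
    using Suc A by (simp add: mult_smult_assoc_mat[of _ n n _ n])
  also have "(A ^\<^sub>m k) * (c \<cdot>\<^sub>m A) = c \<cdot>\<^sub>m (A ^\<^sub>m Suc k)"
    using A by (simp add: mult_smult_distrib[of _ n n _ n])
  finally show ?case using A by (auto intro!: eq_matI)
qed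

lemma trace_mat_exp_smult_eq_sum_exp_eigenvalues:
  fixes A :: "complex mat"
  assumes A: "A \<in> carrier_mat n n" and char: "char_poly A = (\<Prod>e\<leftarrow>es. [:- e, 1:])"
  shows "trace_mat (mat_exp (c \<cdot>\<^sub>m A)) = (\<Sum>e\<leftarrow>es. exp (c * e))"
proof -
  have "trace_mat ((c \<cdot>\<^sub>m A) ^\<^sub>m k) / of_nat (fact k) = (\<Sum>i<length es. (c * es ! i) ^ k / fact k)" for k
  proof -
    have "trace_mat ((c \<cdot>\<^sub>m A) ^\<^sub>m k) = c ^ k * trace_mat (A ^\<^sub>m k)"
      unfolding smult_mat_power[OF A] trace_mat_def using A by (simp add: sum_distrib_left)
    also have "\<dots> = c ^ k * (\<Sum>i<length es. es ! i ^ k)"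
      unfolding trace_mat_power_eq_sum_eigenvalues[OF A char]
      by (simp add: sum_list_sum_nth atLeast0LessThan)
    finally show ?thesis
      by (simp add: sum_distrib_left sum_divide_distrib power_mult_distrib)
  qed
  moreover have "(\<lambda>k. \<Sum>i<length es. (c * es ! i) ^ k / fact k) sums (\<Sum>i<length es. exp (c * es ! i))"
  proof (rule sums_sum)
    fix i
    show "(\<lambda>k. (c * es ! i) ^ k / fact k) sums exp (c * es ! i)"
      using exp_converges[of "c * es ! i"] by (simp add: scaleR_conv_of_real divide_inverse mult.commute)
  qed
  ultimately show ?thesis
    unfolding trace_mat_exp[OF smult_carrier_mat[OF A]]
    by (simp add: sums_unique[symmetric] sum_list_sum_nth atLeast0LessThan)
qed

section \<open>Sums of independent two-level spectra\<close>

lemma trace_mat_exp_smult_binary_spectrum: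
  fixes A :: "complex mat" and c :: complex and K :: "'a set"
  assumes A: "A \<in> carrier_mat n n" and fin: "finite K"
    and char: "char_poly A = (\<Prod>b\<in>K \<rightarrow>\<^sub>E {0::nat, 1}.
                 [:- complex_of_real (E0 + (\<Sum>k\<in>K. real (b k) * \<Lambda> k)), 1:])"
  shows "trace_mat (mat_exp (c \<cdot>\<^sub>m A)) = exp (c * E0) * (\<Prod>k\<in>K. 1 + exp (c * \<Lambda> k))"
proof -
  define D where "D = K \<rightarrow>\<^sub>E {0::nat, 1}"
  define E where "E b = complex_of_real (E0 + (\<Sum>k\<in>K. real (b k) * \<Lambda> k))" for b
  obtain bs where bs: "set bs = D" "distinct bs"
    using finite_distinct_list[of D] fin unfolding D_def by (auto intro: finite_PiE)
  have "char_poly A = (\<Prod>e\<leftarrow>map E bs. [:- e, 1:])"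
    unfolding char D_def[symmetric] E_def[symmetric] bs(1)[symmetric]
    by (simp add: prod.distinct_set_conv_list[OF bs(2)] o_def)
  then have "trace_mat (mat_exp (c \<cdot>\<^sub>m A)) = (\<Sum>e\<leftarrow>map E bs. exp (c * e))"
    by (rule trace_mat_exp_smult_eq_sum_exp_eigenvalues[OF A])
  also have "\<dots> = (\<Sum>b\<in>D. exp (c * E b))"
    by (simp add: sum.distinct_set_conv_list[OF bs(2)] bs(1)[symmetric] o_def)
  also have "\<dots> = exp (c * E0) * (\<Sum>b\<in>D. \<Prod>k\<in>K. exp (c * (real (b k) * \<Lambda> k)))"
    unfolding E_def sum_distrib_left
    by (intro sum.cong refl) (simp add: distrib_left sum_distrib_left exp_add exp_sum[OF fin])
  also have "(\<Sum>b\<in>D. \<Prod>k\<in>K. exp (c * (real (b k) * \<Lambda> k))) =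
      (\<Prod>k\<in>K. \<Sum>b\<in>{0::nat, 1}. exp (c * (real b * \<Lambda> k)))"
    unfolding D_def using fin by (rule prod_sum_PiE[symmetric]) auto
  finally show ?thesis by simp
qed

lemma norm_trace_mat_exp_binary_spectrum_squared:
  fixes A :: "complex mat" and K :: "'a set"
  assumes A: "A \<in> carrier_mat n n" and fin: "finite K"
    and char: "char_poly A = (\<Prod>b\<in>K \<rightarrow>\<^sub>E {0::nat, 1}.
                 [:- complex_of_real (E0 + (\<Sum>k\<in>K. real (b k) * \<Lambda> k)), 1:])"
  shows "cmod (trace_mat (mat_exp ((- (\<i> * complex_of_real t)) \<cdot>\<^sub>m A))) ^ 2 =
           (\<Prod>k\<in>K. 2 + 2 * cos (\<Lambda> k * t))"
proof -
  have "cmod (1 + exp (- (\<i> * t) * \<Lambda> k)) ^ 2 = 2 + 2 * cos (\<Lambda> k * t)" for k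
  proof -
    have "cmod (1 + exp (- (\<i> * t) * \<Lambda> k)) ^ 2 = (1 + cos (t * \<Lambda> k)) ^ 2 + sin (t * \<Lambda> k) ^ 2"
      by (simp add: cmod_power2 Re_exp Im_exp)
    also have "\<dots> = 2 + 2 * cos (\<Lambda> k * t)"
      using sin_cos_squared_add[of "t * \<Lambda> k"] by (simp add: power2_eq_square algebra_simps)
    finally show ?thesis .
  qed
  moreover have "cmod (exp (- (\<i> * t) * E0)) = 1"
    by (simp add: norm_exp_eq_Re)
  ultimately show ?thesis
    unfolding trace_mat_exp_smult_binary_spectrum[OF A fin char] norm_mult prod_norm[symmetric]
      power_mult_distrib prod_power_distrib
    by simp
qed

lemma negligible_cos_eq_minus_one: "negligible {t :: real. cos (w * t) = -1}"
proof (cases "w = 0")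
  case True
  then show ?thesis by simp
next
  case False
  have "{t. cos (w * t) = -1} \<subseteq> (\<Union>m::int. {(2 * of_int m + 1) * pi / w})"
  proof
    fix t assume "t \<in> {t. cos (w * t) = -1}"
    then obtain m :: int where "w * t = (2 * of_int m + 1) * pi"
      by (auto simp: cos_eq_minus1)
    then show "t \<in> (\<Union>m::int. {(2 * of_int m + 1) * pi / w})"
      using False by (auto simp: field_simps)
  qed
  moreover have "negligible (\<Union>m::int. {(2 * of_int m + 1) * pi / w})"
    by (intro negligible_countable_Union) auto
  ultimately show ?thesis
    by (rule negligible_subset[rotated])
qed

text \<open>The exponent \<open>0\<close> has to be treated separately, because \<open>0 powr 0 = 0\<close>:
  the function below is \<open>1\<close> only away from the (negligible) zero set of the product.\<close>
lemma has_time_average_prod_two_plus_two_cos_powr_0: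
  assumes "finite K"
  shows "has_time_average (\<lambda>t. (\<Prod>k\<in>K. 2 + 2 * cos (\<Lambda> k * t)) powr 0) 1"
proof (rule has_time_average_spike[OF has_time_average_const])
  show "negligible (\<Union>k\<in>K. {t. cos (\<Lambda> k * t) = -1})"
    using assms by (intro negligible_Union) (auto simp: negligible_cos_eq_minus_one)
  fix t assume "t \<notin> (\<Union>k\<in>K. {t. cos (\<Lambda> k * t) = -1})"
  then have "(\<Prod>k\<in>K. 2 + 2 * cos (\<Lambda> k * t)) \<noteq> 0"
    using assms by (auto simp: prod_zero_iff)
  then show "(\<Prod>k\<in>K. 2 + 2 * cos (\<Lambda> k * t)) powr 0 = 1"
    by simp
qed

lemma powr_power_pos:
  fixes x a :: real
  assumes "n > 0"
  shows "(x powr a) ^ n = x powr (real n * a)"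
  using assms by (cases "x = 0") (simp_all add: powr_power)

lemma has_time_average_prod_two_plus_two_cos_powr_pos:
  fixes \<Lambda> :: "'a \<Rightarrow> real"
  assumes fin: "finite K" and indep: "rat_independent (\<Lambda> ` K)" and s: "s > 0"
  defines "g \<equiv> \<lambda>v. card {k\<in>K. \<Lambda> k = v}"
  shows "has_time_average (\<lambda>t. (\<Prod>k\<in>K. 2 + 2 * cos (\<Lambda> k * t)) powr s)
           (\<Prod>v\<in>\<Lambda> ` K. 4 powr (s * g v) * Gamma (1/2 + s * g v) / (sqrt pi * Gamma (1 + s * g v)))"
proof -
  have g_pos: "g v > 0" if "v \<in> \<Lambda> ` K" for v
    using that fin unfolding g_def by (auto simp: card_gt_0_iff)
  have regroup: "(\<Prod>k\<in>K. 2 + 2 * cos (\<Lambda> k * t)) powr s =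
      (\<Prod>v\<in>\<Lambda> ` K. (2 + 2 * cos (v * t)) powr (s * g v))" for t
  proof -
    have "(\<Prod>k\<in>K. 2 + 2 * cos (\<Lambda> k * t)) powr s = (\<Prod>k\<in>K. (2 + 2 * cos (\<Lambda> k * t)) powr s)"
      by (rule prod_powr_distrib)
    also have "\<dots> = (\<Prod>v\<in>\<Lambda> ` K. \<Prod>k\<in>{k\<in>K. \<Lambda> k = v}. (2 + 2 * cos (\<Lambda> k * t)) powr s)"
      by (rule prod.image_gen[OF fin])
    also have "\<dots> = (\<Prod>v\<in>\<Lambda> ` K. ((2 + 2 * cos (v * t)) powr s) ^ g v)"
      unfolding g_def by (intro prod.cong refl) simp
    also have "\<dots> = (\<Prod>v\<in>\<Lambda> ` K. (2 + 2 * cos (v * t)) powr (s * g v))"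
      using g_pos by (intro prod.cong refl) (simp add: powr_power_pos mult.commute)
    finally show ?thesis .
  qed
  have "continuous_on {-1..1} (\<lambda>x. (2 + 2 * x) powr (s * g v))" if "v \<in> \<Lambda> ` K" for v
    using s g_pos[OF that] by (intro continuous_on_powr') (auto intro!: continuous_intros)
  then have "has_time_average (\<lambda>t. \<Prod>v\<in>\<Lambda> ` K. (2 + 2 * cos (v * t)) powr (s * g v))
      (\<Prod>v\<in>\<Lambda> ` K. cos_mean (\<lambda>x. (2 + 2 * x) powr (s * g v)))"
    using fin indep by (intro has_time_average_prod_continuous_cos) auto
  then show ?thesis
    unfolding regroup using s g_pos by (simp add: cos_mean_two_plus_two_powr cong: prod.cong)
qed

lemma has_time_average_prod_two_plus_two_cos_powr:
  fixes \<Lambda> :: "'a \<Rightarrow> real"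
  assumes "finite K" and "rat_independent (\<Lambda> ` K)" and "s \<ge> 0"
  defines "g \<equiv> \<lambda>v. card {k\<in>K. \<Lambda> k = v}"
  shows "has_time_average (\<lambda>t. (\<Prod>k\<in>K. 2 + 2 * cos (\<Lambda> k * t)) powr s)
           (\<Prod>v\<in>\<Lambda> ` K. 4 powr (s * g v) * Gamma (1/2 + s * g v) / (sqrt pi * Gamma (1 + s * g v)))"
proof (cases "s = 0")
  case True
  then show ?thesis
    using has_time_average_prod_two_plus_two_cos_powr_0[OF assms(1)] by (simp add: Gamma_one_half_real)
next
  case False
  then show ?thesis
    using has_time_average_prod_two_plus_two_cos_powr_pos[OF assms(1,2)] assms(3) unfolding g_def by simp
qed

lemma inj_on_if_card_fibres_eq_1:
  assumes "\<forall>v\<in>f ` K. card {k\<in>K. f k = v} = 1"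
  shows "inj_on f K"
proof (rule inj_onI)
  fix a b assume a: "a \<in> K" and b: "b \<in> K" and ab: "f a = f b"
  then obtain c where c: "{k\<in>K. f k = f a} = {c}"
    using assms by (metis card_1_singletonE image_eqI)
  have "a \<in> {k\<in>K. f k = f a}" "b \<in> {k\<in>K. f k = f a}"
    using a b ab by auto
  then show "a = b" unfolding c by simp
qed

theorem mainTheorem12:
  fixes L :: nat and H :: "complex mat" and E0 :: real and \<Lambda> :: "nat \<Rightarrow> real"
    and lam :: real
  assumes dimH: "H \<in> carrier_mat (2 ^ L) (2 ^ L)"
    and herm: "hermitian_mat H"
    and spec: "char_poly H =
       (\<Prod>n\<in>{1..L} \<rightarrow>\<^sub>E {0::nat, 1}.
          [:- complex_of_real (E0 + (\<Sum>k=1..L. real (n k) * \<Lambda> k)), 1:])"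
    and indep: "\<forall>q :: real \<Rightarrow> rat.
       (\<Sum>v\<in>\<Lambda> ` {1..L}. of_rat (q v) * v) = 0 \<longrightarrow> (\<forall>v\<in>\<Lambda> ` {1..L}. q v = 0)"
    and lam: "lam \<ge> 0"
  defines "chi \<equiv> (\<lambda>t::real. trace_mat (mat_exp ((- (\<i> * complex_of_real t)) \<cdot>\<^sub>m H)))"
    and "g \<equiv> (\<lambda>v::real. card {k\<in>{1..L}. \<Lambda> k = v})"
  shows "has_time_average (\<lambda>t. cmod (chi t) powr (2 * lam))
           (\<Prod>v\<in>\<Lambda> ` {1..L}.
              4 powr (lam * real (g v)) * Gamma (1/2 + lam * real (g v))
              / (sqrt pi * Gamma (1 + lam * real (g v))))
       \<and> ((\<forall>v\<in>\<Lambda> ` {1..L}. g v = 1) \<longrightarrow>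
            has_time_average (\<lambda>t. cmod (chi t)) ((4 / pi) ^ L))"
proof -
  have chi_powr: "cmod (chi t) powr (2 * s) = (\<Prod>k\<in>{1..L}. 2 + 2 * cos (\<Lambda> k * t)) powr s" for t s
  proof -
    have "cmod (chi t) powr (2 * s) = (cmod (chi t) ^ 2) powr s"
      by (simp add: powr_powr[symmetric] powr_numeral)
    also have "cmod (chi t) ^ 2 = (\<Prod>k\<in>{1..L}. 2 + 2 * cos (\<Lambda> k * t))"
      unfolding chi_def by (rule norm_trace_mat_exp_binary_spectrum_squared[OF dimH finite_atLeastAtMost spec])
    finally show ?thesis .
  qed
  have avg: "has_time_average (\<lambda>t. cmod (chi t) powr (2 * s))
      (\<Prod>v\<in>\<Lambda> ` {1..L}. 4 powr (s * g v) * Gamma (1/2 + s * g v) / (sqrt pi * Gamma (1 + s * g v)))"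
    if "s \<ge> 0" for s
    using has_time_average_prod_two_plus_two_cos_powr[OF _ indep[folded rat_independent_def] that]
    unfolding chi_powr g_def by simp
  show ?thesis
  proof (intro conjI impI)
    show "has_time_average (\<lambda>t. cmod (chi t) powr (2 * lam))
           (\<Prod>v\<in>\<Lambda> ` {1..L}. 4 powr (lam * g v) * Gamma (1/2 + lam * g v) / (sqrt pi * Gamma (1 + lam * g v)))"
      by (rule avg[OF lam])
    assume g1: "\<forall>v\<in>\<Lambda> ` {1..L}. g v = 1"
    then have "card (\<Lambda> ` {1..L}) = L"
      using inj_on_if_card_fibres_eq_1[of \<Lambda> "{1..L}"] unfolding g_def by (simp add: card_image)
    then show "has_time_average (\<lambda>t. cmod (chi t)) ((4 / pi) ^ L)"
      using avg[of "1/2"] g1 by (simp add: Gamma_three_halves)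
  qed
qed

end
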